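(* Let $X$ be the Banach space whose underlying set is $\ell_2$ (real square-summable sequences) with the norm $\|x\|=\max\{\|x\|_\infty,\|x\|_2/\sqrt{2}\}$, and let $\theta$ be its origin and $B(\theta,r)$ the closed ball of radius $r$ about $\theta$ in this norm. Let $$A=B(\theta,1)\cap\{x=\{x_n\}_{n\ge1}\in X : x_1=1,\ x_i\ge 0\text{ for all } i\ge1\},$$ $$B=B(\theta,2)\cap\{x=\{x_n\}_{n\ge1}\in X : x_1=2,\ x_i\ge 0\text{ for all } i\ge1\}.$$ If $T:A\cup B\to A\cup B$ is a cyclic relatively nonexpansive mapping, then there exists $(x,y)\in A\times B$ such that $\|x-Tx\|=\|y-Ty\|=\operatorname{dist}(A,B)$.
   Context: $\operatorname{dist}(A,B)=\inf\{\|x-y\|:x\in A,y\in B\}$. $T$ is relatively nonexpansive if $\|Tx-Ty\|\le\|x-y\|$ for all $x\in A$, $y\in B$, and cyclic if $T(A)\subseteq B$ and $T(B)\subseteq A$. *)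

theory Defs
  imports Complex_Main
begin

text \<open>Elements of the space: real sequences x :: nat => real, where the index 0
  plays the role of the first coordinate x_1 of the paper.  The underlying set of X
  is l_2, the square-summable sequences.\<close>

definition ell2 :: "(nat \<Rightarrow> real) set" where
  "ell2 = {x. summable (\<lambda>n. (x n)\<^sup>2)}"

definition supnorm :: "(nat \<Rightarrow> real) \<Rightarrow> real" where
  "supnorm x = (SUP n. \<bar>x n\<bar>)"

definition l2norm :: "(nat \<Rightarrow> real) \<Rightarrow> real" where
  "l2norm x = sqrt (\<Sum>n. (x n)\<^sup>2)"

definition normX :: "(nat \<Rightarrow> real) \<Rightarrow> real" where
  "normX x = max (supnorm x) (l2norm x / sqrt 2)"

definition ballX :: "real \<Rightarrow> (nat \<Rightarrow> real) set" where
  "ballX r = {x \<in> ell2. normX x \<le> r}"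

definition setA :: "(nat \<Rightarrow> real) set" where
  "setA = ballX 1 \<inter> {x \<in> ell2. x 0 = 1 \<and> (\<forall>i. x i \<ge> 0)}"

definition setB :: "(nat \<Rightarrow> real) set" where
  "setB = ballX 2 \<inter> {x \<in> ell2. x 0 = 2 \<and> (\<forall>i. x i \<ge> 0)}"

definition distX :: "(nat \<Rightarrow> real) set \<Rightarrow> (nat \<Rightarrow> real) set \<Rightarrow> real" where
  "distX S U = (INF p \<in> S \<times> U. normX (fst p - snd p))"

definition cyclic_map :: "((nat \<Rightarrow> real) \<Rightarrow> (nat \<Rightarrow> real)) \<Rightarrow> (nat \<Rightarrow> real) set \<Rightarrow> (nat \<Rightarrow> real) set \<Rightarrow> bool" where
  "cyclic_map T S U \<longleftrightarrow> T ` S \<subseteq> U \<and> T ` U \<subseteq> S"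

definition rel_nonexpansive :: "((nat \<Rightarrow> real) \<Rightarrow> (nat \<Rightarrow> real)) \<Rightarrow> (nat \<Rightarrow> real) set \<Rightarrow> (nat \<Rightarrow> real) set \<Rightarrow> bool" where
  "rel_nonexpansive T S U \<longleftrightarrow> (\<forall>x\<in>S. \<forall>y\<in>U. normX (T x - T y) \<le> normX (x - y))"

end

theory Submission
  imports Defs
begin

text \<open>The first coordinates already force \<open>dist(A,B) \<ge> 1\<close>. The corner \<open>y\<^sub>0 = 2e\<^sub>1\<close> of \<open>B\<close>
  differs from any \<open>a \<in> A\<close> only in the first coordinate, where \<open>\<bar>1 - 2\<bar> = \<bar>1\<bar>\<close>, so
  \<open>\<parallel>a - y\<^sub>0\<parallel> = \<parallel>a\<parallel> \<le> 1\<close>. Hence \<open>dist(A,B) = 1\<close> and every pair at distance at most 1 is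
  a best proximity pair. Taking \<open>x = Ty\<^sub>0\<close>, relative nonexpansiveness gives
  \<open>\<parallel>x - Tx\<parallel> \<le> \<parallel>x - y\<^sub>0\<parallel> \<le> 1\<close>, so \<open>(x, y\<^sub>0)\<close> is the required pair.\<close>

lemma normX_eq_if_abs_eq:
  assumes "\<And>n. \<bar>w n\<bar> = \<bar>v n\<bar>"
  shows "normX w = normX v"
proof -
  have "(\<lambda>n. \<bar>w n\<bar>) = (\<lambda>n. \<bar>v n\<bar>)" using assms by auto
  moreover have "(\<lambda>n. (w n)\<^sup>2) = (\<lambda>n. (v n)\<^sup>2)"
    using assms by (metis power2_abs)
  ultimately show ?thesis unfolding normX_def supnorm_def l2norm_def by metis
qed

lemma normX_minus_commute: "normX (a - b) = normX (b - a)"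
  by (rule normX_eq_if_abs_eq) simp

lemma abs_le_supnorm:
  assumes "w \<in> ell2"
  shows "\<bar>w n\<bar> \<le> supnorm w"
proof -
  have summable: "summable (\<lambda>n. (w n)\<^sup>2)" using assms by (simp add: ell2_def)
  have "\<bar>w k\<bar> \<le> sqrt (\<Sum>n. (w n)\<^sup>2)" for k
  proof -
    have "(w k)\<^sup>2 \<le> (\<Sum>n. (w n)\<^sup>2)"
      using summable by (intro sum_le_suminf[where I="{k}", simplified]) auto
    then show ?thesis by (metis real_sqrt_abs real_sqrt_le_mono)
  qed
  then have "bdd_above (range (\<lambda>n. \<bar>w n\<bar>))" by (rule bdd_aboveI2)
  then show ?thesis unfolding supnorm_def by (rule cSUP_upper2) auto
qed

lemma abs_le_normX: "w \<in> ell2 \<Longrightarrow> \<bar>w n\<bar> \<le> normX w"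
  using abs_le_supnorm[of w n] unfolding normX_def by linarith

lemma ell2_diff:
  assumes "a \<in> ell2" "b \<in> ell2"
  shows "a - b \<in> ell2"
proof -
  have "summable (\<lambda>n. 2 * (a n)\<^sup>2 + 2 * (b n)\<^sup>2)"
    using assms by (intro summable_add summable_mult) (auto simp: ell2_def)
  moreover have "norm ((a n - b n)\<^sup>2) \<le> 2 * (a n)\<^sup>2 + 2 * (b n)\<^sup>2" for n
    using zero_le_power2[of "a n + b n"] zero_le_power2[of "a n - b n"]
    by (simp add: power2_eq_square algebra_simps)
  ultimately have "summable (\<lambda>n. (a n - b n)\<^sup>2)"
    by (rule summable_comparison_test'[where N=0])
  then show ?thesis by (simp add: ell2_def)
qed

lemma
  fixes c :: real
  defines "v \<equiv> \<lambda>n. if n = 0 then c else 0"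
  shows ell2_first_coordinate_vector: "v \<in> ell2"
    and normX_first_coordinate_vector: "normX v = \<bar>c\<bar>"
proof -
  have squares: "(\<lambda>n. (v n)\<^sup>2) = (\<lambda>n. if n = 0 then c\<^sup>2 else 0)"
    by (auto simp: v_def)
  then show "v \<in> ell2"
    unfolding ell2_def by (simp add: summable_If_finite_set[where A="{0}", simplified])
  have "range (\<lambda>n. \<bar>v n\<bar>) = {\<bar>c\<bar>, 0}"
    by (auto simp: v_def image_def)
  then have "supnorm v = \<bar>c\<bar>"
    unfolding supnorm_def by (simp add: cSup_insert_If sup_real_def)
  moreover have "l2norm v = \<bar>c\<bar>"
    using suminf_finite[of "{0::nat}" "\<lambda>n. if n = 0 then c\<^sup>2 else 0"]
    unfolding l2norm_def squares by simp
  moreover have "\<bar>c\<bar> / sqrt 2 \<le> \<bar>c\<bar>"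
    by (simp add: divide_le_eq mult_le_cancel_left1)
  ultimately show "normX v = \<bar>c\<bar>" unfolding normX_def by simp
qed

lemma first_coordinate_vector_in_setA: "(\<lambda>n. if n = 0 then 1 else 0) \<in> setA"
  using ell2_first_coordinate_vector[of 1] normX_first_coordinate_vector[of 1]
  by (auto simp: setA_def ballX_def)

lemma first_coordinate_vector_in_setB: "(\<lambda>n. if n = 0 then 2 else 0) \<in> setB"
  using ell2_first_coordinate_vector[of 2] normX_first_coordinate_vector[of 2]
  by (auto simp: setB_def ballX_def)

lemma one_le_normX_diff:
  assumes "a \<in> setA" "b \<in> setB"
  shows "1 \<le> normX (a - b)"
proof -
  have "a - b \<in> ell2" using assms ell2_diff by (auto simp: setA_def setB_def)
  then have "\<bar>(a - b) 0\<bar> \<le> normX (a - b)" by (rule abs_le_normX)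
  moreover have "(a - b) 0 = -1" using assms by (auto simp: setA_def setB_def)
  ultimately show ?thesis by simp
qed

lemma normX_diff_first_coordinate_vector:
  assumes "a \<in> setA"
  shows "normX (a - (\<lambda>n. if n = 0 then 2 else 0)) \<le> 1"
proof -
  have "normX (a - (\<lambda>n. if n = 0 then 2 else 0)) = normX a"
    using assms by (intro normX_eq_if_abs_eq) (auto simp: setA_def)
  also have "\<dots> \<le> 1" using assms by (auto simp: setA_def ballX_def)
  finally show ?thesis .
qed

lemma distX_setA_setB: "distX setA setB = 1"
proof -
  let ?a = "\<lambda>n::nat. if n = 0 then 1 else 0 :: real"
  let ?b = "\<lambda>n::nat. if n = 0 then 2 else 0 :: real"
  have pair: "(?a, ?b) \<in> setA \<times> setB"
    using first_coordinate_vector_in_setA first_coordinate_vector_in_setB by simp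
  have "bdd_below ((\<lambda>p. normX (fst p - snd p)) ` (setA \<times> setB))"
    using one_le_normX_diff by (auto intro!: bdd_belowI2[where m=1])
  from cINF_lower[OF this pair] have "distX setA setB \<le> 1"
    using normX_diff_first_coordinate_vector[OF first_coordinate_vector_in_setA]
    unfolding distX_def by simp
  moreover have "1 \<le> distX setA setB"
    unfolding distX_def using pair one_le_normX_diff by (intro cINF_greatest) auto
  ultimately show ?thesis by simp
qed

lemma normX_diff_eq_distX:
  assumes "a \<in> setA" "b \<in> setB" "normX (a - b) \<le> 1"
  shows "normX (a - b) = distX setA setB"
  using one_le_normX_diff[OF assms(1,2)] assms(3) distX_setA_setB by simp

theorem mainTheorem12:
  fixes T :: "(nat \<Rightarrow> real) \<Rightarrow> (nat \<Rightarrow> real)"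
  assumes "cyclic_map T setA setB"
    and "rel_nonexpansive T setA setB"
  shows "\<exists>x\<in>setA. \<exists>y\<in>setB.
           normX (x - T x) = distX setA setB \<and> normX (y - T y) = distX setA setB"
proof -
  define y :: "nat \<Rightarrow> real" where "y = (\<lambda>n. if n = 0 then 2 else 0)"
  define x where "x = T y"
  have yB: "y \<in> setB" unfolding y_def by (rule first_coordinate_vector_in_setB)
  have xA: "x \<in> setA" and TxB: "T x \<in> setB"
    using assms(1) yB by (auto simp: cyclic_map_def x_def)
  have y_close: "normX (x - y) \<le> 1"
    using normX_diff_first_coordinate_vector[OF xA] by (simp add: y_def)
  have "normX (x - T x) = normX (T x - T y)"
    using normX_minus_commute by (simp add: x_def)
  also have "\<dots> \<le> normX (x - y)"
    using assms(2) xA yB by (auto simp: rel_nonexpansive_def)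
  finally have "normX (x - T x) \<le> 1" using y_close by simp
  then have "normX (x - T x) = distX setA setB"
    using xA TxB by (rule normX_diff_eq_distX[rotated 2])
  moreover have "normX (y - T y) = distX setA setB"
    using normX_diff_eq_distX[OF xA yB y_close] normX_minus_commute by (simp add: x_def)
  ultimately show ?thesis using xA yB by blast
qed

end
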